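(* Let $\mathcal H_S,\mathcal H_M$ be finite-dimensional complex Hilbert spaces and let $\Psi=\sum_{t}\mu_t\,\phi_t\otimes\lambda_t$ be a unit vector in $\mathcal H_S\otimes\mathcal H_M$, where the sum is finite, the $\phi_t\in\mathcal H_S$ and $\lambda_t\in\mathcal H_M$ are unit vectors, the $\mu_t$ are nonzero complex numbers, and $\Pr(\phi_t)>0$ for all $t$. (a) If the vectors $\{\lambda_j\}$ are all collinear, then the $\{\phi_j\}$ are indistinguishable relative to $M$. (b) If the vectors $\{\phi_j\}$ are linearly independent and indistinguishable relative to $M$, then the $\{\lambda_j\}$ are all collinear, i.e. $\lambda_j=e^{i\theta_j}\Lambda$ for a single unit vector $\Lambda$ and real phases $\theta_j$.
   Context: For the pure joint state $\Psi$ with $\rho_S=\mathrm{Tr}_M|\Psi\rangle\langle\Psi|$, and unit vectors $\phi\in\mathcal H_S$, $\eta\in\mathcal H_M$: $\Pr(\phi)=\langle\phi|\rho_S|\phi\rangle$, $\Pr(\phi\wedge\eta)=|\langle\phi\otimes\eta|\Psi\rangle|^2$, $\Pr(\eta\mid\phi)=\Pr(\phi\wedge\eta)/\Pr(\phi)$. Values $\{\phi_j\}$ of $S$ are indistinguishable relative to $M$ iff $\Pr(\eta\mid\phi_j)$ is independent of $j$ for every unit vector $\eta\in\mathcal H_M$. *)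

theory Defs
  imports "HOL-Analysis.Analysis"
begin

text \<open>Finite-dimensional complex Hilbert spaces are modelled as complex^'s and complex^'m
  (with 's, 'm finite types); the tensor product H_S (x) H_M is complex^('s::finite \<times> 'm::finite).\<close>

definition cinner :: "complex^'n \<Rightarrow> complex^'n \<Rightarrow> complex" where
  "cinner a b = (\<Sum>i\<in>UNIV. cnj (a $ i) * b $ i)"

definition tensor :: "complex^'s \<Rightarrow> complex^'m \<Rightarrow> complex^('s::finite \<times> 'm::finite)" where
  "tensor \<phi> \<eta> = (\<chi> p. \<phi> $ fst p * \<eta> $ snd p)"

text \<open>Reduced density matrix rho_S = Tr_M |Psi><Psi|.\<close>
definition rhoS :: "complex^('s::finite \<times> 'm::finite) \<Rightarrow> complex^'s^'s" where
  "rhoS \<Psi> = (\<chi> s s'. \<Sum>m\<in>UNIV. \<Psi> $ (s, m) * cnj (\<Psi> $ (s', m)))"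

definition PrS :: "complex^('s::finite \<times> 'm::finite) \<Rightarrow> complex^'s \<Rightarrow> real" where
  "PrS \<Psi> \<phi> = Re (cinner \<phi> (rhoS \<Psi> *v \<phi>))"

definition PrJ :: "complex^('s::finite \<times> 'm::finite) \<Rightarrow> complex^'s \<Rightarrow> complex^'m \<Rightarrow> real" where
  "PrJ \<Psi> \<phi> \<eta> = (cmod (cinner (tensor \<phi> \<eta>) \<Psi>))\<^sup>2"

definition PrCond :: "complex^('s::finite \<times> 'm::finite) \<Rightarrow> complex^'m \<Rightarrow> complex^'s \<Rightarrow> real" where
  "PrCond \<Psi> \<eta> \<phi> = PrJ \<Psi> \<phi> \<eta> / PrS \<Psi> \<phi>"

definition indistinguishable ::
  "complex^('s::finite \<times> 'm::finite) \<Rightarrow> 't set \<Rightarrow> ('t \<Rightarrow> complex^'s) \<Rightarrow> bool" where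
  "indistinguishable \<Psi> T \<phi> \<longleftrightarrow>
     (\<forall>\<eta>::complex^'m. norm \<eta> = 1 \<longrightarrow>
        (\<forall>j\<in>T. \<forall>k\<in>T. PrCond \<Psi> \<eta> (\<phi> j) = PrCond \<Psi> \<eta> (\<phi> k)))"

definition lin_indep_family :: "'t set \<Rightarrow> ('t \<Rightarrow> complex^'n) \<Rightarrow> bool" where
  "lin_indep_family T v \<longleftrightarrow>
     (\<forall>c :: 't \<Rightarrow> complex. (\<Sum>t\<in>T. c t *s v t) = 0 \<longrightarrow> (\<forall>t\<in>T. c t = 0))"

definition collinear_family :: "'t set \<Rightarrow> ('t \<Rightarrow> complex^'n) \<Rightarrow> bool" where
  "collinear_family T v \<longleftrightarrow> (\<exists>\<Lambda>. \<forall>t\<in>T. \<exists>c::complex. v t = c *s \<Lambda>)"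

end

theory Submission imports Defs begin

text \<open>The whole statement is governed by the partial inner product
  \<open>v\<^sub>\<phi> = \<langle>\<phi>|\<Psi>\<rangle> \<in> H_M\<close>: one has \<open>Pr(\<phi>) = \<parallel>v\<^sub>\<phi>\<parallel>\<^sup>2\<close> and
  \<open>Pr(\<phi> \<and> \<eta>) = |\<langle>\<eta>, v\<^sub>\<phi>\<rangle>|\<^sup>2\<close>, so \<open>Pr(\<eta> | \<phi>)\<close> is the squared overlap of \<open>\<eta>\<close>
  with the direction of \<open>v\<^sub>\<phi>\<close>. For \<open>\<Psi> = \<Sum>\<^sub>t \<mu>\<^sub>t \<phi>\<^sub>t \<otimes> \<lambda>\<^sub>t\<close> every \<open>v\<^sub>\<phi>\<close> is a
  combination of the \<open>\<lambda>\<^sub>t\<close>; if these are collinear, all \<open>v\<^sub>\<phi>\<^sub>j\<close> point in one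
  direction, giving (a). Conversely, indistinguishability forces every unit
  vector orthogonal to \<open>v\<^sub>\<phi>\<^sub>k\<close> to be orthogonal to all \<open>v\<^sub>\<phi>\<^sub>j\<close>. For such \<open>\<eta>\<close>
  the vector \<open>x = \<Sum>\<^sub>t \<mu>\<^sub>t \<langle>\<eta>, \<lambda>\<^sub>t\<rangle> \<phi>\<^sub>t\<close> satisfies \<open>\<langle>\<phi>\<^sub>j, x\<rangle> = \<langle>\<eta>, v\<^sub>\<phi>\<^sub>j\<rangle> = 0\<close>,
  hence \<open>\<langle>x, x\<rangle> = 0\<close>, and linear independence of the \<open>\<phi>\<^sub>t\<close> gives
  \<open>\<langle>\<eta>, \<lambda>\<^sub>t\<rangle> = 0\<close>; so every \<open>\<lambda>\<^sub>t\<close> lies on the line of \<open>v\<^sub>\<phi>\<^sub>k\<close>, which is (b).\<close>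

lemma cinner_diff_left: "cinner (a - b) c = cinner a c - cinner b c"
  by (simp add: cinner_def left_diff_distrib sum_subtractf)

lemma cinner_diff_right: "cinner c (a - b) = cinner c a - cinner c b"
  by (simp add: cinner_def right_diff_distrib sum_subtractf)

lemma cinner_scaleC_left: "cinner (c *s a) b = cnj c * cinner a b"
  by (simp add: cinner_def sum_distrib_left algebra_simps)

lemma cinner_scaleC_right: "cinner a (c *s b) = c * cinner a b"
  by (simp add: cinner_def sum_distrib_left algebra_simps)

lemma cinner_sum_left: "cinner (sum f A) a = (\<Sum>t\<in>A. cinner (f t) a)"
  by (induct A rule: infinite_finite_induct) (auto simp: cinner_def distrib_right sum.distrib)

lemma cinner_sum_right: "cinner a (sum f A) = (\<Sum>t\<in>A. cinner a (f t))"
  by (induct A rule: infinite_finite_induct) (auto simp: cinner_def distrib_left sum.distrib)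

lemma cinner_commute: "cinner b a = cnj (cinner a b)"
  by (simp add: cinner_def mult.commute)

lemma cinner_zero_left [simp]: "cinner 0 a = 0"
  by (simp add: cinner_def)

lemma cinner_self_eq_norm_power2: "cinner x x = of_real ((norm x)\<^sup>2)"
proof -
  have "cinner x x = (\<Sum>i\<in>UNIV. of_real ((cmod (x $ i))\<^sup>2))"
    unfolding cinner_def
    by (rule sum.cong) (simp_all add: complex_norm_square mult.commute del: of_real_power)
  also have "\<dots> = of_real ((norm x)\<^sup>2)"
    by (simp add: norm_vec_def L2_set_def sum_nonneg of_real_sum del: of_real_power)
  finally show ?thesis .
qed

lemma cinner_self_eq_0_iff: "cinner x x = 0 \<longleftrightarrow> x = 0"
  by (simp add: cinner_self_eq_norm_power2)

lemma norm_scaleC: "norm (c *s x) = cmod c * norm (x::complex^'n)"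
proof -
  have "(of_real ((norm (c *s x))\<^sup>2) :: complex) = of_real ((cmod c * norm x)\<^sup>2)"
    unfolding cinner_self_eq_norm_power2[symmetric] cinner_scaleC_left cinner_scaleC_right
    by (simp add: cinner_self_eq_norm_power2 power_mult_distrib complex_norm_square
        mult.commute mult.left_commute del: of_real_power)
  then show ?thesis
    by (simp add: power2_eq_iff_nonneg del: of_real_power)
qed

lemma sum_scaleC_left: "(\<Sum>t\<in>A. f t *s x) = sum f A *s (x::complex^'n)"
  by (simp add: vec_eq_iff sum_distrib_right)

lemma vec_eq_norm_scaleC_unit:
  fixes x :: "complex^'n"
  assumes "x \<noteq> 0"
  obtains e where "norm e = 1" and "x = complex_of_real (norm x) *s e"
proof
  let ?e = "complex_of_real (1 / norm x) *s x"
  show "norm ?e = 1"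
    using assms by (simp add: norm_scaleC norm_divide)
  show "x = complex_of_real (norm x) *s ?e"
    using assms by (simp add: vector_smult_assoc)
qed

lemma vec_eq_cinner_scaleC_if_orthogonal_complement:
  fixes x L :: "complex^'n"
  assumes "norm L = 1"
    and "\<And>\<eta>. cinner \<eta> L = 0 \<Longrightarrow> cinner \<eta> x = 0"
  shows "x = cinner L x *s L"
proof -
  define \<eta> where "\<eta> = x - cinner L x *s L"
  have "cinner L L = 1"
    using assms(1) by (simp add: cinner_self_eq_norm_power2)
  then have "cinner \<eta> L = 0"
    by (simp add: \<eta>_def cinner_diff_left cinner_scaleC_left cinner_commute[of x])
  with assms(2) have "cinner \<eta> \<eta> = 0"
    by (simp add: \<eta>_def cinner_diff_right cinner_scaleC_right)
  then show ?thesis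
    by (simp add: cinner_self_eq_0_iff \<eta>_def)
qed

definition partial_cinner :: "complex^('s::finite \<times> 'm::finite) \<Rightarrow> complex^'s \<Rightarrow> complex^'m" where
  "partial_cinner \<Psi> \<phi> = (\<chi> m. \<Sum>s\<in>UNIV. cnj (\<phi> $ s) * \<Psi> $ (s, m))"

lemma cinner_tensor_eq_partial_cinner:
  "cinner (tensor \<phi> \<eta>) \<Psi> = cinner \<eta> (partial_cinner \<Psi> \<phi>)"
proof -
  have "cinner (tensor \<phi> \<eta>) \<Psi> =
      (\<Sum>s\<in>UNIV. \<Sum>m\<in>UNIV. cnj (\<phi> $ s) * cnj (\<eta> $ m) * \<Psi> $ (s, m))"
    unfolding cinner_def tensor_def
    by (simp add: sum.cartesian_product split_def UNIV_Times_UNIV[symmetric] del: UNIV_Times_UNIV)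
  also have "\<dots> = (\<Sum>m\<in>UNIV. \<Sum>s\<in>UNIV. cnj (\<eta> $ m) * (cnj (\<phi> $ s) * \<Psi> $ (s, m)))"
    by (subst sum.swap) (simp add: algebra_simps)
  also have "\<dots> = cinner \<eta> (partial_cinner \<Psi> \<phi>)"
    by (simp add: cinner_def partial_cinner_def sum_distrib_left)
  finally show ?thesis .
qed

lemma PrJ_eq_partial_cinner: "PrJ \<Psi> \<phi> \<eta> = (cmod (cinner \<eta> (partial_cinner \<Psi> \<phi>)))\<^sup>2"
  by (simp add: PrJ_def cinner_tensor_eq_partial_cinner)

lemma cinner_rhoS_eq_partial_cinner:
  "cinner \<phi> (rhoS \<Psi> *v \<phi>) = cinner (partial_cinner \<Psi> \<phi>) (partial_cinner \<Psi> \<phi>)"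
proof -
  let ?f = "\<lambda>s s' m. cnj (\<phi> $ s) * \<Psi> $ (s, m) * (cnj (\<Psi> $ (s', m)) * \<phi> $ s')"
  have "cinner \<phi> (rhoS \<Psi> *v \<phi>) = (\<Sum>s\<in>UNIV. \<Sum>s'\<in>UNIV. \<Sum>m\<in>UNIV. ?f s s' m)"
    unfolding cinner_def rhoS_def matrix_vector_mult_def
    by (simp add: sum_distrib_left sum_distrib_right algebra_simps)
  also have "\<dots> = (\<Sum>m\<in>UNIV. \<Sum>s\<in>UNIV. \<Sum>s'\<in>UNIV. ?f s s' m)"
    by (subst sum.swap) (simp add: sum.swap[of "?f _"])
  also have "\<dots> = cinner (partial_cinner \<Psi> \<phi>) (partial_cinner \<Psi> \<phi>)"
    unfolding cinner_def partial_cinner_def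
    by (simp add: sum_distrib_left sum_distrib_right mult.commute)
  finally show ?thesis .
qed

lemma PrS_eq_norm_partial_cinner: "PrS \<Psi> \<phi> = (norm (partial_cinner \<Psi> \<phi>))\<^sup>2"
  by (simp add: PrS_def cinner_rhoS_eq_partial_cinner cinner_self_eq_norm_power2)

lemma partial_cinner_sum_tensor:
  assumes "\<Psi> = (\<Sum>t\<in>T. \<mu> t *s tensor (\<phi> t) (lam t))"
  shows "partial_cinner \<Psi> x = (\<Sum>t\<in>T. (\<mu> t * cinner x (\<phi> t)) *s lam t)"
proof -
  have "partial_cinner \<Psi> x $ m = (\<Sum>t\<in>T. (\<mu> t * cinner x (\<phi> t)) *s lam t) $ m" for m
    unfolding assms partial_cinner_def cinner_def tensor_def
    by (simp add: sum_distrib_left sum_distrib_right sum.swap[of _ T] algebra_simps)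
  then show ?thesis
    by (simp add: vec_eq_iff)
qed

lemma PrCond_eq_if_partial_cinner_collinear:
  assumes "partial_cinner \<Psi> \<phi> = a *s L" and "PrS \<Psi> \<phi> > 0"
  shows "PrCond \<Psi> \<eta> \<phi> = (cmod (cinner \<eta> L))\<^sup>2 / (norm L)\<^sup>2"
proof -
  have "a \<noteq> 0"
    using assms by (auto simp: PrS_eq_norm_partial_cinner)
  then show ?thesis
    using assms
    by (simp add: PrCond_def PrJ_eq_partial_cinner PrS_eq_norm_partial_cinner cinner_scaleC_right
        norm_scaleC norm_mult power_mult_distrib)
qed

lemma indistinguishable_if_collinear_family:
  assumes "\<Psi> = (\<Sum>t\<in>T. \<mu> t *s tensor (\<phi> t) (lam t))"
    and "collinear_family T lam"
    and "\<forall>t\<in>T. PrS \<Psi> (\<phi> t) > 0"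
  shows "indistinguishable \<Psi> T \<phi>"
proof -
  obtain L c where lam: "\<forall>t\<in>T. lam t = c t *s L"
    using assms(2) unfolding collinear_family_def by metis
  have "partial_cinner \<Psi> (\<phi> j) = (\<Sum>t\<in>T. \<mu> t * cinner (\<phi> j) (\<phi> t) * c t) *s L" for j
    unfolding partial_cinner_sum_tensor[OF assms(1)] sum_scaleC_left[symmetric]
    by (rule sum.cong) (simp_all add: lam vector_smult_assoc)
  then have "PrCond \<Psi> \<eta> (\<phi> j) = (cmod (cinner \<eta> L))\<^sup>2 / (norm L)\<^sup>2" if "j \<in> T" for j \<eta>
    using PrCond_eq_if_partial_cinner_collinear assms(3) that by blast
  then show ?thesis
    unfolding indistinguishable_def by simp
qed

text \<open>Orthogonality to \<open>v\<^sub>\<phi>\<close> means \<open>Pr(\<eta> | \<phi>) = 0\<close> after normalising \<open>\<eta>\<close>, and this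
  value is shared by all indistinguishable \<open>\<phi>\<^sub>j\<close>.\<close>

lemma orthogonal_partial_cinner_if_indistinguishable:
  assumes "indistinguishable \<Psi> T \<phi>" and "j \<in> T" and "k \<in> T"
    and "PrS \<Psi> (\<phi> j) > 0"
    and "cinner \<eta> (partial_cinner \<Psi> (\<phi> k)) = 0"
  shows "cinner \<eta> (partial_cinner \<Psi> (\<phi> j)) = 0"
proof (cases "\<eta> = 0")
  case False
  then obtain e where e: "norm e = 1" and \<eta>: "\<eta> = complex_of_real (norm \<eta>) *s e"
    by (rule vec_eq_norm_scaleC_unit)
  have "cinner e (partial_cinner \<Psi> (\<phi> k)) = 0"
    using assms(5) False by (subst (asm) \<eta>) (simp add: cinner_scaleC_left)
  then have "PrCond \<Psi> e (\<phi> k) = 0"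
    by (simp add: PrCond_def PrJ_eq_partial_cinner)
  then have "PrCond \<Psi> e (\<phi> j) = 0"
    using assms(1-3) e unfolding indistinguishable_def by metis
  then have "cinner e (partial_cinner \<Psi> (\<phi> j)) = 0"
    using assms(4) by (simp add: PrCond_def PrJ_eq_partial_cinner)
  then show ?thesis
    by (subst \<eta>) (simp add: cinner_scaleC_left)
qed simp

lemma orthogonal_family_if_orthogonal_partial_cinner:
  assumes "\<Psi> = (\<Sum>t\<in>T. \<mu> t *s tensor (\<phi> t) (lam t))"
    and "lin_indep_family T \<phi>"
    and "\<forall>t\<in>T. \<mu> t \<noteq> 0"
    and "\<forall>j\<in>T. cinner \<eta> (partial_cinner \<Psi> (\<phi> j)) = 0"
    and "t \<in> T"
  shows "cinner \<eta> (lam t) = 0"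
proof -
  define c where "c s = \<mu> s * cinner \<eta> (lam s)" for s
  define x where "x = (\<Sum>s\<in>T. c s *s \<phi> s)"
  have "cinner (\<phi> j) x = cinner \<eta> (partial_cinner \<Psi> (\<phi> j))" for j
    unfolding x_def c_def partial_cinner_sum_tensor[OF assms(1)]
    by (simp add: cinner_sum_right cinner_scaleC_right mult_ac)
  then have "cinner x x = 0"
    using assms(4) by (subst (1) x_def) (simp add: cinner_sum_left cinner_scaleC_left)
  then have "x = 0"
    by (simp add: cinner_self_eq_0_iff)
  then have "c t = 0"
    using assms(2,5) unfolding lin_indep_family_def x_def by blast
  then show ?thesis
    using assms(3,5) by (simp add: c_def)
qed

lemma exp_scaleC_if_unit_multiple:
  fixes x L :: "complex^'n"
  assumes "x = a *s L" and "norm x = 1" and "norm L = 1"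
  shows "\<exists>\<theta>::real. x = exp (\<i> * of_real \<theta>) *s L"
proof -
  have "norm a = 1"
    using assms by (simp add: norm_scaleC)
  then show ?thesis
    using assms(1) complex_norm_eq_1_exp_eq by metis
qed

theorem lemmaA1:
  fixes \<Psi> :: "complex^('s::finite \<times> 'm::finite)"
    and T :: "'t set"
    and \<phi> :: "'t \<Rightarrow> complex^'s"
    and lam :: "'t \<Rightarrow> complex^'m"
    and \<mu> :: "'t \<Rightarrow> complex"
  assumes "finite T"
    and "norm \<Psi> = 1"
    and "\<Psi> = (\<Sum>t\<in>T. \<mu> t *s tensor (\<phi> t) (lam t))"
    and "\<forall>t\<in>T. norm (\<phi> t) = 1"
    and "\<forall>t\<in>T. norm (lam t) = 1"
    and "\<forall>t\<in>T. \<mu> t \<noteq> 0"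
    and "\<forall>t\<in>T. PrS \<Psi> (\<phi> t) > 0"
  shows "(collinear_family T lam \<longrightarrow> indistinguishable \<Psi> T \<phi>)
       \<and> (lin_indep_family T \<phi> \<and> indistinguishable \<Psi> T \<phi> \<longrightarrow>
            (\<exists>\<Lambda>::complex^'m. norm \<Lambda> = 1 \<and>
               (\<forall>t\<in>T. \<exists>\<theta>::real. lam t = exp (\<i> * of_real \<theta>) *s \<Lambda>)))"
proof (intro conjI impI)
  show "collinear_family T lam \<Longrightarrow> indistinguishable \<Psi> T \<phi>"
    using indistinguishable_if_collinear_family assms(3,7) by blast
next
  assume indep: "lin_indep_family T \<phi> \<and> indistinguishable \<Psi> T \<phi>"
  obtain k where k: "k \<in> T"
    using assms(2,3) by fastforce
  have "partial_cinner \<Psi> (\<phi> k) \<noteq> 0"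
    using assms(7) k by (auto simp: PrS_eq_norm_partial_cinner)
  then obtain L where L: "norm L = 1"
    and vk: "partial_cinner \<Psi> (\<phi> k) = complex_of_real (norm (partial_cinner \<Psi> (\<phi> k))) *s L"
    by (rule vec_eq_norm_scaleC_unit)
  have "cinner \<eta> (lam t) = 0" if "cinner \<eta> L = 0" and "t \<in> T" for \<eta> t
  proof -
    have "cinner \<eta> (partial_cinner \<Psi> (\<phi> k)) = 0"
      using that(1) by (subst vk) (simp add: cinner_scaleC_right)
    then have "\<forall>j\<in>T. cinner \<eta> (partial_cinner \<Psi> (\<phi> j)) = 0"
      using indep assms(7) k
      by (auto intro: orthogonal_partial_cinner_if_indistinguishable[where k = k])
    then show ?thesis
      using orthogonal_family_if_orthogonal_partial_cinner[OF assms(3)] indep assms(6) that(2)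
      by simp
  qed
  then have "\<forall>t\<in>T. lam t = cinner L (lam t) *s L"
    using L vec_eq_cinner_scaleC_if_orthogonal_complement by blast
  then show "\<exists>\<Lambda>::complex^'m. norm \<Lambda> = 1 \<and> (\<forall>t\<in>T. \<exists>\<theta>::real. lam t = exp (\<i> * of_real \<theta>) *s \<Lambda>)"
    using L assms(5) exp_scaleC_if_unit_multiple by metis
qed

end
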